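(* Let $m\ge 2$, let $K/F$ be a cyclic Galois field extension of degree $m$ with $\mathrm{Gal}(K/F)=\langle\sigma\rangle$, and suppose $F$ contains a primitive $m$th root of unity $\omega$. Let $d\in K\setminus F$ and suppose that the nonassociative cyclic algebra $A=(K/F,\sigma,d)$ is a division algebra. Then $A$ is a nonassociative cyclic extension of $K$ of degree $m$, and the corresponding cyclic subgroup of order $m$ of $\mathrm{Aut}_F(A)$ is generated by the automorphism $H_{\mathrm{id},\omega}$.
   Context: For a field $K$ and $\sigma\in\mathrm{Aut}(K)$, the twisted polynomial ring $K[t;\sigma]$ consists of polynomials $\sum a_it^i$ ($a_i\in K$) with termwise addition and multiplication determined by $ta=\sigma(a)t$. For $f=t^m-d\in K[t;\sigma]$, $d\in K^\times$, every $g$ can be uniquely written $g=qf+r$ with $\deg r<m$ (right division); the nonassociative cyclic algebra $(K/F,\sigma,d)$ is the $F$-vector space of polynomials of degree $<m$ with multiplication $g\circ h=$ remainder of $gh$ on right division by $f$; it is a unital (generally nonassociative) algebra over $F$ containing $K$. For $k\in K$ with $N_{K/F}(k)=1$, $H_{\mathrm{id},k}(\sum_{i=0}^{m-1}a_it^i)=a_0+\sum_{i=1}^{m-1}a_i\big(\prod_{l=0}^{i-1}\sigma^l(k)\big)t^i$. An algebra $A\ne0$ is a division algebra if left and right multiplication by every nonzero element are bijective. Definition: if $A$ is a nonassociative division algebra and $D\subseteq A$ an associative division subalgebra, $A$ is a nonassociative cyclic extension of $D$ of degree $m$ if $A$ is a free left $D$-module of rank $m$ and $\mathrm{Aut}(A)$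 has a cyclic subgroup $G$ of order $m$ such that $H|_D=\mathrm{id}_D$ for all $H\in G$. *)

theory Defs
  imports Main "HOL-Library.FuncSet"
begin

text \<open>The field K is the whole type 'k; the base field F is a subset of it.
  Elements of K[t;sigma] are coefficient functions nat => 'k (with finite support).\<close>

definition subfield :: "'k::field set \<Rightarrow> bool" where
  "subfield F \<longleftrightarrow> 0 \<in> F \<and> 1 \<in> F \<and>
     (\<forall>x\<in>F. \<forall>y\<in>F. x + y \<in> F \<and> x - y \<in> F \<and> x * y \<in> F) \<and>
     (\<forall>x\<in>F. inverse x \<in> F)"

definition field_aut :: "('k::field \<Rightarrow> 'k) \<Rightarrow> bool" where
  "field_aut s \<longleftrightarrow> bij s \<and> (\<forall>x y. s (x + y) = s x + s y) \<and> (\<forall>x y. s (x * y) = s x * s y)"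

definition Gal :: "'k::field set \<Rightarrow> ('k \<Rightarrow> 'k) set" where
  "Gal F = {s. field_aut s \<and> (\<forall>x\<in>F. s x = x)}"

definition ext_degree :: "'k::field set \<Rightarrow> nat \<Rightarrow> bool" where
  "ext_degree F n \<longleftrightarrow> (\<exists>b :: nat \<Rightarrow> 'k.
     (\<forall>x. \<exists>c. (\<forall>i<n. c i \<in> F) \<and> x = (\<Sum>i<n. c i * b i)) \<and>
     (\<forall>c. (\<forall>i<n. c i \<in> F) \<and> (\<Sum>i<n. c i * b i) = 0 \<longrightarrow> (\<forall>i<n. c i = 0)))"

definition cyclic_galois :: "'k::field set \<Rightarrow> ('k \<Rightarrow> 'k) \<Rightarrow> nat \<Rightarrow> bool" where
  "cyclic_galois F \<sigma> m \<longleftrightarrow> subfield F \<and> ext_degree F m \<and> finite (Gal F) \<and>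
     card (Gal F) = m \<and> Gal F = {\<sigma> ^^ i | i. True}"

definition primitive_root :: "'k::field \<Rightarrow> nat \<Rightarrow> bool" where
  "primitive_root w m \<longleftrightarrow> w ^ m = 1 \<and> (\<forall>i. 0 < i \<and> i < m \<longrightarrow> w ^ i \<noteq> 1)"

text \<open>Multiplication in K[t;sigma]: (sum g_i t^i)(sum h_j t^j), using t a = sigma(a) t.\<close>
definition tmul :: "('k::field \<Rightarrow> 'k) \<Rightarrow> (nat \<Rightarrow> 'k) \<Rightarrow> (nat \<Rightarrow> 'k) \<Rightarrow> (nat \<Rightarrow> 'k)" where
  "tmul \<sigma> g h = (\<lambda>n. \<Sum>i\<le>n. g i * (\<sigma> ^^ i) (h (n - i)))"

definition tpoly :: "(nat \<Rightarrow> 'k::zero) \<Rightarrow> bool" where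
  "tpoly g \<longleftrightarrow> (\<exists>N. \<forall>n\<ge>N. g n = 0)"

definition fpoly :: "nat \<Rightarrow> 'k::field \<Rightarrow> (nat \<Rightarrow> 'k)" where
  "fpoly m d = (\<lambda>n. if n = m then 1 else if n = 0 then - d else 0)"

definition rrem :: "('k::field \<Rightarrow> 'k) \<Rightarrow> nat \<Rightarrow> 'k \<Rightarrow> (nat \<Rightarrow> 'k) \<Rightarrow> (nat \<Rightarrow> 'k)" where
  "rrem \<sigma> m d g = (THE r. (\<forall>n\<ge>m. r n = 0) \<and>
      (\<exists>q. tpoly q \<and> g = (\<lambda>n. tmul \<sigma> q (fpoly m d) n + r n)))"

text \<open>Underlying set of the nonassociative cyclic algebra (K/F,sigma,d):
  polynomials of degree < m.\<close>
definition ncarrier :: "nat \<Rightarrow> (nat \<Rightarrow> 'k::zero) set" where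
  "ncarrier m = {a. \<forall>n\<ge>m. a n = 0}"

definition nmul :: "('k::field \<Rightarrow> 'k) \<Rightarrow> nat \<Rightarrow> 'k \<Rightarrow> (nat \<Rightarrow> 'k) \<Rightarrow> (nat \<Rightarrow> 'k) \<Rightarrow> (nat \<Rightarrow> 'k)" where
  "nmul \<sigma> m d g h = rrem \<sigma> m d (tmul \<sigma> g h)"

definition nadd :: "(nat \<Rightarrow> 'k::field) \<Rightarrow> (nat \<Rightarrow> 'k) \<Rightarrow> (nat \<Rightarrow> 'k)" where
  "nadd x y = (\<lambda>n. x n + y n)"

definition nscal :: "'k::field \<Rightarrow> (nat \<Rightarrow> 'k) \<Rightarrow> (nat \<Rightarrow> 'k)" where
  "nscal c x = (\<lambda>n. c * x n)"

definition nconst :: "'k::field \<Rightarrow> (nat \<Rightarrow> 'k)" where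
  "nconst k = (\<lambda>n. if n = 0 then k else 0)"

definition division_alg :: "(nat \<Rightarrow> 'k::field) set \<Rightarrow> ((nat \<Rightarrow> 'k) \<Rightarrow> (nat \<Rightarrow> 'k) \<Rightarrow> (nat \<Rightarrow> 'k)) \<Rightarrow> bool" where
  "division_alg Ac mul \<longleftrightarrow> Ac \<noteq> {\<lambda>n. 0} \<and>
     (\<forall>a\<in>Ac. a \<noteq> (\<lambda>n. 0) \<longrightarrow> bij_betw (\<lambda>x. mul a x) Ac Ac \<and> bij_betw (\<lambda>x. mul x a) Ac Ac)"

definition alg_aut :: "'k::field set \<Rightarrow> (nat \<Rightarrow> 'k) set \<Rightarrow> ((nat \<Rightarrow> 'k) \<Rightarrow> (nat \<Rightarrow> 'k) \<Rightarrow> (nat \<Rightarrow> 'k))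
     \<Rightarrow> ((nat \<Rightarrow> 'k) \<Rightarrow> (nat \<Rightarrow> 'k)) \<Rightarrow> bool" where
  "alg_aut F Ac mul h \<longleftrightarrow> bij_betw h Ac Ac \<and>
     (\<forall>x\<in>Ac. \<forall>y\<in>Ac. h (nadd x y) = nadd (h x) (h y)) \<and>
     (\<forall>c\<in>F. \<forall>x\<in>Ac. h (nscal c x) = nscal c (h x)) \<and>
     (\<forall>x\<in>Ac. \<forall>y\<in>Ac. h (mul x y) = mul (h x) (h y))"

definition cyc_gen :: "(nat \<Rightarrow> 'k) set \<Rightarrow> ((nat \<Rightarrow> 'k) \<Rightarrow> (nat \<Rightarrow> 'k)) \<Rightarrow> ((nat \<Rightarrow> 'k) \<Rightarrow> (nat \<Rightarrow> 'k)) set" where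
  "cyc_gen Ac h = {restrict (h ^^ i) Ac | i. True}"

definition cyc_ext_group :: "'k::field set \<Rightarrow> (nat \<Rightarrow> 'k) set \<Rightarrow> ((nat \<Rightarrow> 'k) \<Rightarrow> (nat \<Rightarrow> 'k) \<Rightarrow> (nat \<Rightarrow> 'k))
     \<Rightarrow> (nat \<Rightarrow> 'k) set \<Rightarrow> nat \<Rightarrow> ((nat \<Rightarrow> 'k) \<Rightarrow> (nat \<Rightarrow> 'k)) set \<Rightarrow> bool" where
  "cyc_ext_group F Ac mul D m G \<longleftrightarrow>
     (\<exists>h. alg_aut F Ac mul h \<and> G = cyc_gen Ac h) \<and>
     (\<forall>g\<in>G. alg_aut F Ac mul g) \<and> finite G \<and> card G = m \<and>
     (\<forall>g\<in>G. \<forall>x\<in>D. g x = x)"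

definition assoc_div_subalg :: "(nat \<Rightarrow> 'k::field) set \<Rightarrow> ((nat \<Rightarrow> 'k) \<Rightarrow> (nat \<Rightarrow> 'k) \<Rightarrow> (nat \<Rightarrow> 'k))
     \<Rightarrow> (nat \<Rightarrow> 'k) \<Rightarrow> (nat \<Rightarrow> 'k) set \<Rightarrow> bool" where
  "assoc_div_subalg Ac mul one D \<longleftrightarrow> D \<subseteq> Ac \<and> one \<in> D \<and>
     (\<forall>x\<in>D. \<forall>y\<in>D. nadd x y \<in> D \<and> mul x y \<in> D) \<and>
     (\<forall>x\<in>D. (\<lambda>n. - x n) \<in> D) \<and>
     (\<forall>x\<in>D. \<forall>y\<in>D. \<forall>z\<in>D. mul (mul x y) z = mul x (mul y z)) \<and>
     D \<noteq> {\<lambda>n. 0} \<and>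
     (\<forall>a\<in>D. a \<noteq> (\<lambda>n. 0) \<longrightarrow> bij_betw (\<lambda>x. mul a x) D D \<and> bij_betw (\<lambda>x. mul x a) D D)"

definition free_left_module :: "(nat \<Rightarrow> 'k::field) set \<Rightarrow> ((nat \<Rightarrow> 'k) \<Rightarrow> (nat \<Rightarrow> 'k) \<Rightarrow> (nat \<Rightarrow> 'k))
     \<Rightarrow> (nat \<Rightarrow> 'k) set \<Rightarrow> nat \<Rightarrow> bool" where
  "free_left_module Ac mul D m \<longleftrightarrow> (\<exists>b :: nat \<Rightarrow> (nat \<Rightarrow> 'k). (\<forall>i<m. b i \<in> Ac) \<and>
     (\<forall>x\<in>Ac. \<exists>c. (\<forall>i<m. c i \<in> D) \<and> x = (\<lambda>n. \<Sum>i<m. mul (c i) (b i) n)) \<and>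
     (\<forall>c. (\<forall>i<m. c i \<in> D) \<and> (\<lambda>n. \<Sum>i<m. mul (c i) (b i) n) = (\<lambda>n. 0)
          \<longrightarrow> (\<forall>i<m. c i = (\<lambda>n. 0))))"

definition nacyc_ext :: "'k::field set \<Rightarrow> (nat \<Rightarrow> 'k) set \<Rightarrow> ((nat \<Rightarrow> 'k) \<Rightarrow> (nat \<Rightarrow> 'k) \<Rightarrow> (nat \<Rightarrow> 'k))
     \<Rightarrow> (nat \<Rightarrow> 'k) \<Rightarrow> (nat \<Rightarrow> 'k) set \<Rightarrow> nat \<Rightarrow> bool" where
  "nacyc_ext F Ac mul one D m \<longleftrightarrow> division_alg Ac mul \<and> assoc_div_subalg Ac mul one D \<and>
     free_left_module Ac mul D m \<and> (\<exists>G. cyc_ext_group F Ac mul D m G)"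

definition Hk :: "('k::field \<Rightarrow> 'k) \<Rightarrow> nat \<Rightarrow> 'k \<Rightarrow> (nat \<Rightarrow> 'k) \<Rightarrow> (nat \<Rightarrow> 'k)" where
  "Hk \<sigma> m k a = (\<lambda>n. if n = 0 then a 0
      else if n < m then a n * (\<Prod>l<n. (\<sigma> ^^ l) k) else 0)"

end

theory Submission imports Defs begin

text \<open>Since \<omega> lies in F it is fixed by \<sigma>, and then H_{id,\<omega>} simply multiplies the coefficient
  of t^n by \<omega>^n. This rescaling commutes with multiplication in K[t;\<sigma>] (the twist \<sigma> does not
  move powers of \<omega>) and maps f = t^m - d to itself because \<omega>^m = 1, so it commutes with taking
  remainders and is an automorphism of A fixing K. Its powers are the rescalings by \<omega>^i, which
  are pairwise distinct for i < m as \<omega> is a primitive m-th root of unity. The remaining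
  conditions are bookkeeping: K is embedded as constants and 1, t, ..., t^(m-1) is a left
  K-basis of A.\<close>

locale skew_endo =
  fixes \<sigma> :: "'k::field \<Rightarrow> 'k"
  assumes sigma_add: "\<And>x y. \<sigma> (x + y) = \<sigma> x + \<sigma> y"
    and sigma_mult: "\<And>x y. \<sigma> (x * y) = \<sigma> x * \<sigma> y"
    and sigma_one: "\<sigma> 1 = 1"
begin

lemma iter_add: "(\<sigma> ^^ i) (x + y) = (\<sigma> ^^ i) x + (\<sigma> ^^ i) y"
  by (induct i) (auto simp: sigma_add)

lemma iter_mult: "(\<sigma> ^^ i) (x * y) = (\<sigma> ^^ i) x * (\<sigma> ^^ i) y"
  by (induct i) (auto simp: sigma_mult)

lemma iter_one: "(\<sigma> ^^ i) 1 = 1"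
  by (induct i) (auto simp: sigma_one)

lemma sigma_zero: "\<sigma> 0 = 0"
  using sigma_add[of 0 0] by (metis add_cancel_right_right)

lemma iter_zero: "(\<sigma> ^^ i) 0 = 0"
  by (induct i) (auto simp: sigma_zero)

lemma iter_uminus: "(\<sigma> ^^ i) (- x) = - (\<sigma> ^^ i) x"
  using iter_add[of i "- x" x] by (simp add: iter_zero eq_neg_iff_add_eq_0)

lemma iter_fixpoint: "\<sigma> c = c \<Longrightarrow> (\<sigma> ^^ i) c = c"
  by (induct i) auto

lemma sigma_power_fixpoint: "\<sigma> c = c \<Longrightarrow> \<sigma> (c ^ i) = c ^ i"
  by (induct i) (auto simp: sigma_mult sigma_one)

end

lemma field_aut_skew_endo:
  assumes "field_aut s" shows "skew_endo s"
proof
  show add: "s (x + y) = s x + s y" and mult: "s (x * y) = s x * s y" for x y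
    using assms by (auto simp: field_aut_def)
  obtain x where "s x = 1"
    using assms by (metis bij_def field_aut_def surjD)
  with mult[of 1 x] show "s 1 = 1" by simp
qed

definition tpow :: "nat \<Rightarrow> nat \<Rightarrow> 'k::field" where
  "tpow i = (\<lambda>n. if n = i then 1 else 0)"

definition scale_coeffs :: "'k::field \<Rightarrow> (nat \<Rightarrow> 'k) \<Rightarrow> (nat \<Rightarrow> 'k)" where
  "scale_coeffs c a = (\<lambda>n. c ^ n * a n)"

lemma tpow_in_ncarrier: "i < m \<Longrightarrow> tpow i \<in> ncarrier m"
  by (simp add: tpow_def ncarrier_def)

lemma scale_coeffs_in_ncarrier: "a \<in> ncarrier m \<Longrightarrow> scale_coeffs c a \<in> ncarrier m"
  by (auto simp: scale_coeffs_def ncarrier_def)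

lemma scale_coeffs_mult: "scale_coeffs c (scale_coeffs c' a) = scale_coeffs (c * c') a"
  by (simp add: scale_coeffs_def fun_eq_iff power_mult_distrib algebra_simps)

lemma funpow_scale_coeffs: "scale_coeffs c ^^ i = scale_coeffs (c ^ i)"
  by (induct i) (auto simp: fun_eq_iff scale_coeffs_def scale_coeffs_mult[unfolded scale_coeffs_def])

lemma scale_coeffs_inverse: "c \<noteq> 0 \<Longrightarrow> scale_coeffs (inverse c) (scale_coeffs c a) = a"
  by (simp add: scale_coeffs_mult) (simp add: scale_coeffs_def)

lemma scale_coeffs_nconst: "scale_coeffs c (nconst k) = nconst k"
  by (auto simp: scale_coeffs_def nconst_def)

lemma nconst_in_ncarrier: "0 < m \<Longrightarrow> nconst k \<in> ncarrier m"
  by (auto simp: nconst_def ncarrier_def)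

lemma restrict_funpow_cong:
  assumes "\<And>x. x \<in> A \<Longrightarrow> h x = g x" and "g ` A \<subseteq> A"
  shows "restrict (h ^^ i) A = restrict (g ^^ i) A"
proof -
  have "\<forall>x\<in>A. (h ^^ i) x = (g ^^ i) x \<and> (g ^^ i) x \<in> A"
    by (induct i) (use assms in auto)
  then show ?thesis by (auto intro: restrict_ext)
qed

lemma cyc_gen_cong:
  "(\<And>x. x \<in> A \<Longrightarrow> h x = g x) \<Longrightarrow> g ` A \<subseteq> A \<Longrightarrow> cyc_gen A h = cyc_gen A g"
  unfolding cyc_gen_def using restrict_funpow_cong by metis

lemma primitive_root_inj_on:
  assumes "primitive_root w m" shows "inj_on (\<lambda>i. w ^ i) {..<m}"
proof -
  have no_repeat: False if "i < j" "j < m" "w ^ i = w ^ j" for i j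
  proof -
    have "w \<noteq> 0"
      using assms that by (auto simp: primitive_root_def power_0_left)
    have "w ^ j = w ^ i * w ^ (j - i)"
      using \<open>i < j\<close> by (simp flip: power_add)
    with that \<open>w \<noteq> 0\<close> have "w ^ (j - i) = 1" by simp
    with that assms show False by (auto simp: primitive_root_def)
  qed
  show ?thesis
    by (rule inj_onI) (metis lessThan_iff linorder_neqE_nat no_repeat)
qed

locale skew_cyclic = skew_endo \<sigma> for \<sigma> :: "'k::field \<Rightarrow> 'k" +
  fixes m :: nat and d :: 'k
  assumes m_pos: "0 < m"
begin

lemma tmul_fpoly:
  "tmul \<sigma> q (fpoly m d) n = (if m \<le> n then q (n - m) else 0) - q n * (\<sigma> ^^ n) d"
proof -
  have "tmul \<sigma> q (fpoly m d) n = (\<Sum>i\<le>n. (if i = n - m then (if m \<le> n then q i else 0) else 0)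
        + (if i = n then - (q n * (\<sigma> ^^ n) d) else 0))"
    unfolding tmul_def using m_pos
    by (intro sum.cong) (auto simp: fpoly_def iter_one iter_zero iter_uminus)
  then show ?thesis by (simp add: sum.distrib)
qed

definition right_division :: "(nat \<Rightarrow> 'k) \<Rightarrow> (nat \<Rightarrow> 'k) \<Rightarrow> (nat \<Rightarrow> 'k) \<Rightarrow> bool" where
  "right_division g q r \<longleftrightarrow> tpoly q \<and> r \<in> ncarrier m \<and> g = (\<lambda>n. tmul \<sigma> q (fpoly m d) n + r n)"

text \<open>Comparing the coefficients of t^(k+m) in two such representations gives
  p k = p (k+m) \<sigma>^(k+m)(d) for the difference p of the quotients, so p vanishes by
  descending from its degree.\<close>
lemma right_division_unique:
  assumes "right_division g q r" "right_division g q' r'"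
  shows "r = r'"
proof -
  define p where "p = (\<lambda>k. q k - q' k)"
  obtain N1 N2 where N: "\<forall>n\<ge>N1. q n = 0" "\<forall>n\<ge>N2. q' n = 0"
    using assms unfolding right_division_def tpoly_def by blast
  have eq: "tmul \<sigma> q (fpoly m d) n + r n = tmul \<sigma> q' (fpoly m d) n + r' n" for n
    using assms by (auto simp: right_division_def fun_eq_iff)
  have step: "p k = p (k + m) * (\<sigma> ^^ (k + m)) d" for k
  proof -
    have "r (k + m) = 0" "r' (k + m) = 0"
      using assms by (auto simp: right_division_def ncarrier_def)
    with eq[of "k + m"] show ?thesis by (simp add: tmul_fpoly p_def algebra_simps)
  qed
  have descend: "\<forall>k. N1 + N2 \<le> k + j * m \<longrightarrow> p k = 0" for j
  proof (induct j)
    case 0 then show ?case using N by (auto simp: p_def)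
  next
    case (Suc j)
    have "N1 + N2 \<le> k + Suc j * m \<Longrightarrow> p k = 0" for k
      using Suc step[of k] by (simp add: add.assoc)
    then show ?case by blast
  qed
  have "N1 + N2 \<le> k + (N1 + N2) * m" for k
    using m_pos by (simp add: trans_le_add2)
  then have "q k = q' k" for k
    using descend[of "N1 + N2"] by (simp add: p_def)
  show ?thesis
  proof
    fix n show "r n = r' n"
    proof (cases "m \<le> n")
      case True then show ?thesis using assms by (simp add: right_division_def ncarrier_def)
    next
      case False
      with eq[of n] \<open>\<And>k. q k = q' k\<close> show ?thesis by (simp add: tmul_fpoly)
    qed
  qed
qed

text \<open>The quotient coefficient recursion q k = g (k+m) + q (k+m) \<sigma>^(k+m)(d) unrolled j times;
  it becomes independent of j once k + j m exceeds the degree of g.\<close>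
fun quot_coeff :: "(nat \<Rightarrow> 'k) \<Rightarrow> nat \<Rightarrow> nat \<Rightarrow> 'k" where
  "quot_coeff g 0 k = 0"
| "quot_coeff g (Suc j) k = g (k + m) + quot_coeff g j (k + m) * (\<sigma> ^^ (k + m)) d"

lemma quot_coeff_eq_0: "\<forall>n\<ge>N. g n = 0 \<Longrightarrow> N \<le> k \<Longrightarrow> quot_coeff g j k = 0"
  by (induct j arbitrary: k) auto

lemma quot_coeff_stable:
  "\<forall>n\<ge>N. g n = 0 \<Longrightarrow> N \<le> k + j * m \<Longrightarrow> quot_coeff g (Suc j) k = quot_coeff g j k"
proof (induct j arbitrary: k)
  case (Suc j)
  then have "N \<le> (k + m) + j * m" by simp
  with Suc.hyps[of "k + m"] Suc.prems show ?case by simp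
qed auto

lemma right_division_exists:
  assumes "tpoly g" shows "\<exists>q r. right_division g q r"
proof -
  obtain N where N: "\<forall>n\<ge>N. g n = 0" using assms unfolding tpoly_def by blast
  define q where "q = quot_coeff g (Suc N)"
  have q_step: "q k = g (k + m) + q (k + m) * (\<sigma> ^^ (k + m)) d" for k
  proof -
    have "N \<le> (k + m) + N * m" using m_pos by (simp add: trans_le_add2)
    then have "quot_coeff g (Suc N) (k + m) = quot_coeff g N (k + m)"
      by (rule quot_coeff_stable[OF N])
    then show ?thesis by (simp add: q_def)
  qed
  have "tpoly q" unfolding tpoly_def q_def using quot_coeff_eq_0[OF N] by blast
  define r where "r = (\<lambda>n. if n < m then g n - tmul \<sigma> q (fpoly m d) n else 0)"
  have "g = (\<lambda>n. tmul \<sigma> q (fpoly m d) n + r n)"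
  proof
    fix n show "g n = tmul \<sigma> q (fpoly m d) n + r n"
    proof (cases "n < m")
      case False
      then obtain k where "n = k + m" by (metis add.commute le_add_diff_inverse not_less)
      then show ?thesis using q_step[of k] by (simp add: r_def tmul_fpoly)
    qed (simp add: r_def)
  qed
  moreover have "r \<in> ncarrier m" by (simp add: r_def ncarrier_def)
  ultimately have "right_division g q r"
    using \<open>tpoly q\<close> by (simp add: right_division_def)
  then show ?thesis by blast
qed

lemma rrem_eqI: assumes "right_division g q r" shows "rrem \<sigma> m d g = r"
  unfolding rrem_def
proof (rule the_equality)
  show "(\<forall>n\<ge>m. r n = 0) \<and> (\<exists>q. tpoly q \<and> g = (\<lambda>n. tmul \<sigma> q (fpoly m d) n + r n))"
    using assms by (auto simp: right_division_def ncarrier_def)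
next
  fix r' assume "(\<forall>n\<ge>m. r' n = 0) \<and> (\<exists>q. tpoly q \<and> g = (\<lambda>n. tmul \<sigma> q (fpoly m d) n + r' n))"
  then have "\<exists>q'. right_division g q' r'" by (auto simp: right_division_def ncarrier_def)
  then show "r' = r" using right_division_unique assms by blast
qed

lemma right_division_rrem: "tpoly g \<Longrightarrow> \<exists>q. right_division g q (rrem \<sigma> m d g)"
  using right_division_exists rrem_eqI by blast

lemma rrem_ncarrier: "r \<in> ncarrier m \<Longrightarrow> rrem \<sigma> m d r = r"
  by (rule rrem_eqI) (auto simp: right_division_def tpoly_def tmul_def)

lemma tpoly_tmul:
  assumes "a \<in> ncarrier m" "b \<in> ncarrier m" shows "tpoly (tmul \<sigma> a b)"
  unfolding tpoly_def
proof (intro exI allI impI)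
  fix n :: nat assume "2 * m \<le> n"
  then have "a i * (\<sigma> ^^ i) (b (n - i)) = 0" if "i \<le> n" for i
    using assms by (cases "m \<le> i") (auto simp: ncarrier_def iter_zero)
  then show "tmul \<sigma> a b n = 0" unfolding tmul_def by (auto intro!: sum.neutral)
qed

lemma nmul_in_ncarrier: "a \<in> ncarrier m \<Longrightarrow> b \<in> ncarrier m \<Longrightarrow> nmul \<sigma> m d a b \<in> ncarrier m"
  using right_division_rrem tpoly_tmul by (fastforce simp: nmul_def right_division_def)

lemma tmul_scale_coeffs:
  assumes "\<sigma> c = c" shows "tmul \<sigma> (scale_coeffs c a) (scale_coeffs c b) = scale_coeffs c (tmul \<sigma> a b)"
proof
  fix n
  have "c ^ i * a i * (\<sigma> ^^ i) (c ^ (n - i) * b (n - i)) = c ^ n * (a i * (\<sigma> ^^ i) (b (n - i)))"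
    if "i \<le> n" for i
  proof -
    have "c ^ n = c ^ i * c ^ (n - i)" using that by (simp flip: power_add)
    then show ?thesis
      using iter_fixpoint[OF sigma_power_fixpoint[OF assms]] by (simp add: iter_mult)
  qed
  then show "tmul \<sigma> (scale_coeffs c a) (scale_coeffs c b) n = scale_coeffs c (tmul \<sigma> a b) n"
    unfolding scale_coeffs_def tmul_def sum_distrib_left by (intro sum.cong) auto
qed

lemma tmul_fpoly_scale_coeffs:
  assumes "c ^ m = 1"
  shows "tmul \<sigma> (scale_coeffs c q) (fpoly m d) = scale_coeffs c (tmul \<sigma> q (fpoly m d))"
proof
  fix n
  have "m \<le> n \<Longrightarrow> c ^ (n - m) = c ^ n"
    using assms by (metis le_add_diff_inverse2 mult.right_neutral power_add)
  then show "tmul \<sigma> (scale_coeffs c q) (fpoly m d) n = scale_coeffs c (tmul \<sigma> q (fpoly m d)) n"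
    by (auto simp: tmul_fpoly scale_coeffs_def algebra_simps)
qed

lemma rrem_scale_coeffs:
  assumes "tpoly g" "c ^ m = 1"
  shows "rrem \<sigma> m d (scale_coeffs c g) = scale_coeffs c (rrem \<sigma> m d g)"
proof -
  obtain q where q: "right_division g q (rrem \<sigma> m d g)"
    using right_division_rrem[OF assms(1)] by blast
  then have "scale_coeffs c g =
      (\<lambda>n. tmul \<sigma> (scale_coeffs c q) (fpoly m d) n + scale_coeffs c (rrem \<sigma> m d g) n)"
    unfolding tmul_fpoly_scale_coeffs[OF assms(2)] right_division_def
    by (metis (no_types, lifting) distrib_left scale_coeffs_def)
  with q have "right_division (scale_coeffs c g) (scale_coeffs c q) (scale_coeffs c (rrem \<sigma> m d g))"
    by (auto simp: right_division_def tpoly_def scale_coeffs_def ncarrier_def)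
  then show ?thesis by (rule rrem_eqI)
qed

lemma nmul_scale_coeffs:
  assumes "a \<in> ncarrier m" "b \<in> ncarrier m" "\<sigma> c = c" "c ^ m = 1"
  shows "nmul \<sigma> m d (scale_coeffs c a) (scale_coeffs c b) = scale_coeffs c (nmul \<sigma> m d a b)"
  unfolding nmul_def tmul_scale_coeffs[OF assms(3)]
  using rrem_scale_coeffs[OF tpoly_tmul[OF assms(1,2)] assms(4)] .

lemma alg_aut_scale_coeffs:
  assumes "\<sigma> c = c" "c ^ m = 1" and h: "\<And>x. x \<in> ncarrier m \<Longrightarrow> h x = scale_coeffs c x"
  shows "alg_aut F (ncarrier m) (nmul \<sigma> m d) h"
proof -
  have "c \<noteq> 0" using assms(2) m_pos by (metis one_neq_zero zero_power)
  then have "bij_betw (scale_coeffs c) (ncarrier m) (ncarrier m)"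
    by (intro bij_betw_byWitness[where f' = "scale_coeffs (inverse c)"])
       (auto simp: scale_coeffs_inverse scale_coeffs_in_ncarrier
             scale_coeffs_inverse[of "inverse c", simplified])
  then have "bij_betw h (ncarrier m) (ncarrier m)"
    using h bij_betw_cong by metis
  moreover have "h (nadd x y) = nadd (h x) (h y)" "h (nscal k x) = nscal k (h x)"
    if "x \<in> ncarrier m" "y \<in> ncarrier m" for x y k
    using that by (auto simp: h nadd_def nscal_def scale_coeffs_def ncarrier_def algebra_simps)
  moreover have "h (nmul \<sigma> m d x y) = nmul \<sigma> m d (h x) (h y)"
    if "x \<in> ncarrier m" "y \<in> ncarrier m" for x y
    using that by (simp add: h nmul_in_ncarrier nmul_scale_coeffs assms(1,2))
  ultimately show ?thesis unfolding alg_aut_def by blast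
qed

lemma Hk_eq_scale_coeffs:
  assumes "\<sigma> c = c" "x \<in> ncarrier m" shows "Hk \<sigma> m c x = scale_coeffs c x"
  using assms by (auto simp: Hk_def scale_coeffs_def ncarrier_def iter_fixpoint fun_eq_iff)

lemma cyc_gen_scale_coeffs:
  assumes "c ^ m = 1"
  shows "cyc_gen (ncarrier m) (scale_coeffs c) = (\<lambda>i. restrict (scale_coeffs (c ^ i)) (ncarrier m)) ` {..<m}"
proof -
  have "c ^ i = c ^ (i mod m)" for i
    by (metis assms div_mult_mod_eq power_add power_mult power_one mult_1 mult.commute)
  then show ?thesis
    unfolding cyc_gen_def funpow_scale_coeffs using m_pos
    by (auto simp: image_iff) (metis lessThan_iff mod_less_divisor)
qed

lemma card_cyc_gen_scale_coeffs:
  assumes "primitive_root c m" "2 \<le> m"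
  shows "card (cyc_gen (ncarrier m) (scale_coeffs c)) = m"
proof -
  have "inj_on (\<lambda>i. restrict (scale_coeffs (c ^ i)) (ncarrier m)) {..<m}"
  proof (rule inj_onI)
    fix i j assume ij: "i \<in> {..<m}" "j \<in> {..<m}"
      and "restrict (scale_coeffs (c ^ i)) (ncarrier m) = restrict (scale_coeffs (c ^ j)) (ncarrier m)"
    \<comment> \<open>the rescalings are told apart by their value at t, which lies in A only for m \<ge> 2\<close>
    moreover have "tpow 1 \<in> ncarrier m" using assms(2) by (simp add: tpow_in_ncarrier)
    ultimately have "scale_coeffs (c ^ i) (tpow 1) 1 = scale_coeffs (c ^ j) (tpow 1) 1"
      by (metis restrict_apply')
    then have "c ^ i = c ^ j" by (simp add: scale_coeffs_def tpow_def)
    with ij show "i = j" using primitive_root_inj_on[OF assms(1)] by (auto dest: inj_onD)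
  qed
  then show ?thesis
    using assms(1) by (simp add: cyc_gen_scale_coeffs primitive_root_def card_image)
qed

lemma cyc_ext_group_Hk:
  assumes "\<sigma> c = c" "primitive_root c m" "2 \<le> m"
  shows "cyc_ext_group F (ncarrier m) (nmul \<sigma> m d) (range nconst) m (cyc_gen (ncarrier m) (Hk \<sigma> m c))"
proof -
  have cm: "c ^ m = 1" using assms(2) by (simp add: primitive_root_def)
  then have "(c ^ i) ^ m = 1" for i by (metis power_mult mult.commute power_one)
  have G: "cyc_gen (ncarrier m) (Hk \<sigma> m c) = cyc_gen (ncarrier m) (scale_coeffs c)"
    by (intro cyc_gen_cong) (auto simp: Hk_eq_scale_coeffs assms(1) scale_coeffs_in_ncarrier)
  have gen: "alg_aut F (ncarrier m) (nmul \<sigma> m d) (scale_coeffs c)"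
    using alg_aut_scale_coeffs[OF assms(1) cm] by blast
  have auts: "\<forall>g\<in>cyc_gen (ncarrier m) (scale_coeffs c). alg_aut F (ncarrier m) (nmul \<sigma> m d) g"
    using cm sigma_power_fixpoint[OF assms(1)] \<open>\<And>i. (c ^ i) ^ m = 1\<close>
    by (auto simp: cyc_gen_scale_coeffs intro!: alg_aut_scale_coeffs)
  have fixes_K: "\<forall>g\<in>cyc_gen (ncarrier m) (scale_coeffs c). \<forall>x\<in>range nconst. g x = x"
    using nconst_in_ncarrier[OF m_pos] by (auto simp: cyc_gen_scale_coeffs cm scale_coeffs_nconst)
  have "finite (cyc_gen (ncarrier m) (scale_coeffs c))"
    by (simp add: cyc_gen_scale_coeffs[OF cm])
  then show ?thesis
    unfolding cyc_ext_group_def G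
    using gen auts fixes_K card_cyc_gen_scale_coeffs[OF assms(2,3)] by blast
qed

lemma nmul_nconst: "nmul \<sigma> m d (nconst a) x = (\<lambda>n. a * x n)" if "x \<in> ncarrier m"
proof -
  have "tmul \<sigma> (nconst a) x = (\<lambda>n. a * x n)"
    unfolding tmul_def nconst_def fun_eq_iff
    by (simp add: if_distrib[of "\<lambda>y. y * _"] sum.delta' cong: if_cong)
  then show ?thesis
    using that by (simp add: nmul_def rrem_ncarrier ncarrier_def)
qed

lemma nmul_nconst_nconst: "nmul \<sigma> m d (nconst a) (nconst b) = nconst (a * b)"
  using nmul_nconst[OF nconst_in_ncarrier[OF m_pos]] by (auto simp: nconst_def)

lemma bij_betw_nmul_nconst:
  assumes "a \<noteq> 0"
  shows "bij_betw (nmul \<sigma> m d (nconst a)) (range nconst) (range nconst)"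
  by (rule bij_betw_byWitness[where f' = "nmul \<sigma> m d (nconst (inverse a))"])
     (auto simp: nmul_nconst_nconst assms mult.assoc[symmetric])

lemma assoc_div_subalg_nconst:
  "assoc_div_subalg (ncarrier m) (nmul \<sigma> m d) (nconst 1) (range nconst)"
  unfolding assoc_div_subalg_def
proof (intro conjI ballI impI)
  have nadd_nconst: "nadd (nconst a) (nconst b) = nconst (a + b)" for a b
    by (auto simp: nadd_def nconst_def)
  have uminus_nconst: "(\<lambda>n. - nconst a n) = nconst (- a)" for a
    by (auto simp: nconst_def)
  show "range nconst \<subseteq> ncarrier m" "nconst 1 \<in> range nconst"
    using nconst_in_ncarrier[OF m_pos] by auto
  show "nadd x y \<in> range nconst" "nmul \<sigma> m d x y \<in> range nconst"
    if "x \<in> range nconst" "y \<in> range nconst" for x y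
    using that by (auto simp: nadd_nconst nmul_nconst_nconst)
  show "(\<lambda>n. - x n) \<in> range nconst" if "x \<in> range nconst" for x
    using that by (auto simp: uminus_nconst)
  show "nmul \<sigma> m d (nmul \<sigma> m d x y) z = nmul \<sigma> m d x (nmul \<sigma> m d y z)"
    if "x \<in> range nconst" "y \<in> range nconst" "z \<in> range nconst" for x y z
    using that by (auto simp: nmul_nconst_nconst mult.assoc)
  have "nconst 1 \<noteq> (\<lambda>n. 0 :: 'k)"
    by (auto simp: nconst_def fun_eq_iff)
  then show "range nconst \<noteq> {\<lambda>n. 0 :: 'k}"
    by blast
next
  fix x :: "nat \<Rightarrow> 'k" assume "x \<in> range nconst" "x \<noteq> (\<lambda>n. 0)"
  then obtain a where x: "x = nconst a" and "a \<noteq> 0"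
    by (metis nconst_def rangeE)
  then show "bij_betw (nmul \<sigma> m d x) (range nconst) (range nconst)"
    using bij_betw_nmul_nconst by simp
  have "nmul \<sigma> m d y x = nmul \<sigma> m d x y" if "y \<in> range nconst" for y
    using that by (auto simp: x nmul_nconst_nconst mult.commute)
  then have "bij_betw (\<lambda>y. nmul \<sigma> m d y x) (range nconst) (range nconst) =
      bij_betw (nmul \<sigma> m d x) (range nconst) (range nconst)"
    by (rule bij_betw_cong)
  then show "bij_betw (\<lambda>y. nmul \<sigma> m d y x) (range nconst) (range nconst)"
    using \<open>bij_betw (nmul \<sigma> m d x) (range nconst) (range nconst)\<close> by simp
qed

lemma sum_nmul_nconst_tpow:
  "(\<lambda>n. \<Sum>i<m. nmul \<sigma> m d (nconst (a i)) (tpow i) n) = (\<lambda>n. if n < m then a n else 0)"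
proof
  fix n
  have "(\<Sum>i<m. nmul \<sigma> m d (nconst (a i)) (tpow i) n) = (\<Sum>i<m. if i = n then a i else 0)"
    by (intro sum.cong refl) (simp add: nmul_nconst[OF tpow_in_ncarrier], simp add: tpow_def)
  then show "(\<Sum>i<m. nmul \<sigma> m d (nconst (a i)) (tpow i) n) = (if n < m then a n else 0)"
    by simp
qed

lemma free_left_module_nconst: "free_left_module (ncarrier m) (nmul \<sigma> m d) (range nconst) m"
  unfolding free_left_module_def
proof (rule exI[of _ tpow], intro conjI allI ballI impI)
  show "i < m \<Longrightarrow> tpow i \<in> ncarrier m" for i
    by (rule tpow_in_ncarrier)
  fix x :: "nat \<Rightarrow> 'k" assume "x \<in> ncarrier m"
  then show "\<exists>c. (\<forall>i<m. c i \<in> range nconst) \<and> x = (\<lambda>n. \<Sum>i<m. nmul \<sigma> m d (c i) (tpow i) n)"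
    by (intro exI[of _ "\<lambda>i. nconst (x i)"]) (auto simp: sum_nmul_nconst_tpow ncarrier_def fun_eq_iff)
next
  fix c i assume c: "(\<forall>i<m. c i \<in> range nconst) \<and> (\<lambda>n. \<Sum>i<m. nmul \<sigma> m d (c i) (tpow i) n) = (\<lambda>n. 0)"
    and "i < m"
  have c_nconst: "c j = nconst (c j 0)" if j: "j < m" for j
  proof -
    obtain b where "c j = nconst b" using c j by blast
    then show ?thesis by (simp add: nconst_def)
  qed
  have "(\<lambda>n. \<Sum>j<m. nmul \<sigma> m d (c j) (tpow j) n) =
      (\<lambda>n. \<Sum>j<m. nmul \<sigma> m d (nconst (c j 0)) (tpow j) n)"
    by (intro ext sum.cong refl) (metis c_nconst lessThan_iff)
  with c have "(\<lambda>n. if n < m then c n 0 else 0) = (\<lambda>n. 0)"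
    unfolding sum_nmul_nconst_tpow by simp
  from fun_cong[OF this, of i] \<open>i < m\<close> have "c i 0 = 0" by simp
  with c_nconst[OF \<open>i < m\<close>] show "c i = (\<lambda>n. 0)" by (simp add: nconst_def)
qed

end

theorem theorem2p3:
  fixes F :: "'k::field set" and \<sigma> :: "'k \<Rightarrow> 'k" and m :: nat and d \<omega> :: 'k
  assumes "m \<ge> 2"
    and "cyclic_galois F \<sigma> m"
    and "\<omega> \<in> F" and "primitive_root \<omega> m"
    and "d \<notin> F"
    and "division_alg (ncarrier m) (nmul \<sigma> m d)"
  shows "nacyc_ext F (ncarrier m) (nmul \<sigma> m d) (nconst 1) (range nconst) m \<and>
         cyc_ext_group F (ncarrier m) (nmul \<sigma> m d) (range nconst) m
           (cyc_gen (ncarrier m) (Hk \<sigma> m \<omega>))"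
proof -
  have "\<sigma> = \<sigma> ^^ 1" by simp
  then have "\<sigma> \<in> Gal F"
    using assms(2) unfolding cyclic_galois_def by blast
  then have "field_aut \<sigma>" and "\<sigma> \<omega> = \<omega>"
    using assms(3) by (auto simp: Gal_def)
  then interpret skew_cyclic \<sigma> m d
    using field_aut_skew_endo assms(1) by (simp add: skew_cyclic_def skew_cyclic_axioms_def)
  have G: "cyc_ext_group F (ncarrier m) (nmul \<sigma> m d) (range nconst) m (cyc_gen (ncarrier m) (Hk \<sigma> m \<omega>))"
    using cyc_ext_group_Hk \<open>\<sigma> \<omega> = \<omega>\<close> assms(1,4) by blast
  then show ?thesis
    unfolding nacyc_ext_def
    using assms(6) assoc_div_subalg_nconst free_left_module_nconst by blast
qed

end
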